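(* Let $X$ be a real Banach space and $h:X\times X^*\to\mathbb{R}\cup\{\pm\infty\}$ a convex function with $h(x,x^* )\geq\langle x,x^*\rangle$ for all $(x,x^* )\in X\times X^*$. Then $$P_2(D(h))\subseteq\mathrm{cl}_{w*}P_1(D(h^* )),\qquad P_1(D(h))\subseteq\mathrm{cl}_{w*}P_2(D(h^* )),$$ where the first closure is the weak-$*$ closure in $X^*$ and the second is the weak-$*$ closure in $X^{**}$.
   Context: $X$ is identified with its canonical image in $X^{**}$. $P_1,P_2$ are the canonical projections of a Cartesian product onto its factors; $D(f)=\{z\;|\;f(z)<\infty\}$. The conjugate of $h$ is $h^*:X^*\times X^{**}\to\mathbb{R}\cup\{\pm\infty\}$, $h^*(x^*,x^{**})=\sup_{(y,y^* )\in X\times X^*}\langle y,x^*\rangle+\langle x^{**},y^*\rangle-h(y,y^* )$. *)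

theory Defs
  imports "HOL-Analysis.Analysis"
begin

text \<open>Dual space of X: bounded linear functionals X \<Rightarrow>L real. Bidual: (X \<Rightarrow>L real) \<Rightarrow>L real.\<close>

definition canon :: "'a::real_normed_vector \<Rightarrow> (('a \<Rightarrow>\<^sub>L real) \<Rightarrow>\<^sub>L real)" where
  "canon x = Blinfun (\<lambda>f. blinfun_apply f x)"

text \<open>Weak-star topology on the dual of V: the initial topology of the evaluations at points of V,
  i.e. the pullback of the product topology on V \<Rightarrow> real.\<close>
definition weak_star :: "('b::real_normed_vector \<Rightarrow>\<^sub>L real) topology" where
  "weak_star = pullback_topology UNIV blinfun_apply (product_topology (\<lambda>_. euclideanreal) UNIV)"

definition convex_efun :: "('v::real_vector \<Rightarrow> ereal) \<Rightarrow> bool" where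
  "convex_efun f \<longleftrightarrow> convex {(z, t::real). f z \<le> ereal t}"

definition edom :: "('v \<Rightarrow> ereal) \<Rightarrow> 'v set" where
  "edom f = {z. f z < \<infinity>}"

definition conj_fitz ::
  "('a::real_normed_vector \<times> ('a \<Rightarrow>\<^sub>L real) \<Rightarrow> ereal)
   \<Rightarrow> ('a \<Rightarrow>\<^sub>L real) \<times> (('a \<Rightarrow>\<^sub>L real) \<Rightarrow>\<^sub>L real) \<Rightarrow> ereal" where
  "conj_fitz h = (\<lambda>(xs, xss). SUP p \<in> UNIV.
      ereal (blinfun_apply xs (fst p) + blinfun_apply xss (snd p)) - h p)"

end

theory Submission
  imports Defs
begin

text \<open>Fix \<open>(x\<^sub>0, x\<^sub>0\<^sup>*)\<close> with \<open>h(x\<^sub>0, x\<^sub>0\<^sup>*) < \<infinity>\<close> and \<open>\<epsilon> > 0\<close>, and perturb \<open>h\<close> in the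
  \<open>X\<close>-direction: \<open>k(z) = inf\<^sub>s h(z - (s, 0)) + \<langle>s, x\<^sub>0\<^sup>*\<rangle> + \<epsilon>\<parallel>s\<parallel>\<close>. Since \<open>h\<close> dominates the
  continuous duality pairing, \<open>k\<close> is bounded below near \<open>(x\<^sub>0, x\<^sub>0\<^sup>*)\<close>, so a Hahn--Banach separation
  from its (convex) epigraph yields a continuous affine minorant \<open>\<psi> + \<beta>\<close> of \<open>k\<close>, hence of \<open>h\<close>.
  Then \<open>(\<psi>(\<cdot>, 0), \<psi>(0, \<cdot>))\<close> lies in the domain of \<open>h\<^sup>*\<close>, and minorising \<open>k\<close> rather than \<open>h\<close>
  forces \<open>\<parallel>\<psi>(\<cdot>, 0) - x\<^sub>0\<^sup>*\<parallel> \<le> \<epsilon>\<close>. So \<open>x\<^sub>0\<^sup>*\<close> is a norm limit, a fortiori a weak-* limit, of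
  points of \<open>P\<^sub>1(D(h\<^sup>*))\<close>; perturbing in the \<open>X\<^sup>*\<close>-direction gives the second inclusion.\<close>

section \<open>Hahn--Banach for sublinear functionals\<close>

definition sublinear :: "('v::real_vector \<Rightarrow> real) \<Rightarrow> bool" where
  "sublinear q \<longleftrightarrow> (\<forall>x y. q (x + y) \<le> q x + q y) \<and> (\<forall>c x. 0 < c \<longrightarrow> q (c *\<^sub>R x) \<le> c * q x)"

lemma sublinearI:
  assumes "\<And>x y. q (x + y) \<le> q x + q y" and "\<And>c x. 0 < c \<Longrightarrow> q (c *\<^sub>R x) \<le> c * q x"
  shows "sublinear q"
  using assms unfolding sublinear_def by blast

lemma sublinear_add_le: "sublinear q \<Longrightarrow> q (x + y) \<le> q x + q y"
  unfolding sublinear_def by blast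

lemma sublinear_scaleR_le: "sublinear q \<Longrightarrow> 0 < c \<Longrightarrow> q (c *\<^sub>R x) \<le> c * q x"
  unfolding sublinear_def by blast

lemma sublinear_zero:
  assumes "sublinear q"
  shows "q 0 = 0"
  using sublinear_add_le[OF assms, of 0 0] sublinear_scaleR_le[OF assms, of "1/2" 0] by simp

lemma sublinear_neg_le:
  assumes "sublinear q"
  shows "- q (- x) \<le> q x"
  using sublinear_add_le[OF assms, of x "- x"] sublinear_zero[OF assms] by simp

lemma sublinear_scaleR:
  assumes "sublinear q" and "0 \<le> c"
  shows "q (c *\<^sub>R x) = c * q x"
proof (cases "c = 0")
  case True
  then show ?thesis using sublinear_zero[OF assms(1)] by simp
next
  case False
  with assms(2) have c: "0 < c" by simp
  have "q x = q (inverse c *\<^sub>R (c *\<^sub>R x))" using c by simp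
  also have "\<dots> \<le> inverse c * q (c *\<^sub>R x)"
    using sublinear_scaleR_le[OF assms(1), of "inverse c" "c *\<^sub>R x"] c by simp
  finally have "c * q x \<le> q (c *\<^sub>R x)" using c by (simp add: field_simps)
  then show ?thesis using sublinear_scaleR_le[OF assms(1) c, of x] by simp
qed

lemma sublinear_INF_chain:
  assumes "Q \<noteq> {}" and sub: "\<And>q. q \<in> Q \<Longrightarrow> sublinear q \<and> q \<le> p"
    and chain: "\<And>q r. q \<in> Q \<Longrightarrow> r \<in> Q \<Longrightarrow> q \<le> r \<or> r \<le> q"
  shows "sublinear (\<lambda>x. INF q\<in>Q. q x)" and "q \<in> Q \<Longrightarrow> (\<lambda>x. INF q\<in>Q. q x) \<le> q"
proof -
  define g where "g x = (INF q\<in>Q. q x)" for x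
  have "bdd_below ((\<lambda>q. q x) ` Q)" for x
  proof (rule bdd_belowI2)
    fix q assume q: "q \<in> Q"
    then have "- p (- x) \<le> - q (- x)" using sub by (simp add: le_fun_def)
    also have "\<dots> \<le> q x" using sublinear_neg_le sub[OF q] by blast
    finally show "- p (- x) \<le> q x" .
  qed
  then have g_le: "g x \<le> q x" if "q \<in> Q" for q x
    unfolding g_def using that by (rule cINF_lower)
  have le_g: "c \<le> g x" if "\<And>q. q \<in> Q \<Longrightarrow> c \<le> q x" for c x
    unfolding g_def using \<open>Q \<noteq> {}\<close> that by (rule cINF_greatest)
  show "sublinear g"
  proof (rule sublinearI)
    fix x y
    have sum_le: "g (x + y) \<le> q1 x + q2 y" if q12: "q1 \<in> Q" "q2 \<in> Q" for q1 q2
    proof -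
      obtain r where r: "r \<in> Q" "r \<le> q1" "r \<le> q2" using chain[OF q12] q12 by blast
      have "g (x + y) \<le> r (x + y)" using g_le r(1) .
      also have "\<dots> \<le> r x + r y" using sub[OF r(1)] sublinear_add_le by blast
      also have "\<dots> \<le> q1 x + q2 y" using add_mono[OF le_funD[OF r(2)] le_funD[OF r(3)]] .
      finally show ?thesis .
    qed
    have "g (x + y) - q2 y \<le> g x" if "q2 \<in> Q" for q2
    proof (rule le_g)
      fix q1 assume "q1 \<in> Q"
      from sum_le[OF this that] show "g (x + y) - q2 y \<le> q1 x" by simp
    qed
    then have "g (x + y) - g x \<le> g y"
      by (intro le_g) (metis diff_le_eq add.commute le_diff_eq)
    then show "g (x + y) \<le> g x + g y" by simp
  next
    fix c :: real and x assume c: "0 < c"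
    have "g (c *\<^sub>R x) / c \<le> g x"
    proof (rule le_g)
      fix q assume q: "q \<in> Q"
      have "g (c *\<^sub>R x) \<le> c * q x"
        using g_le[OF q] sublinear_scaleR_le[OF conjunct1[OF sub[OF q]] c] by (rule order_trans)
      then show "g (c *\<^sub>R x) / c \<le> q x" using c by (simp add: field_simps)
    qed
    then show "g (c *\<^sub>R x) \<le> c * g x" using c by (simp add: field_simps)
  qed
  show "g \<le> q" if "q \<in> Q" using g_le[OF that] by (rule le_funI)
qed

lemma sublinear_INF_ray:
  fixes q :: "'v::real_vector \<Rightarrow> real"
  assumes "sublinear q"
  obtains r where "sublinear r" and "r \<le> q" and "r (- a) \<le> - q a"
proof -
  define r where "r x = (INF t\<in>{0..}. q (x + t *\<^sub>R a) - t * q a)" for x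
  have "- q (- x) \<le> q (x + t *\<^sub>R a) - t * q a" if "0 \<le> t" for x t
    using sublinear_add_le[OF assms(1), of "x + t *\<^sub>R a" "- x"] sublinear_scaleR[OF assms(1) that, of a]
    by simp
  then have "bdd_below ((\<lambda>t. q (x + t *\<^sub>R a) - t * q a) ` {0..})" for x
    by (auto intro!: bdd_belowI2[where m="- q (- x)"])
  then have r_le: "r x \<le> q (x + t *\<^sub>R a) - t * q a" if "0 \<le> t" for x t
    unfolding r_def using that by (intro cINF_lower) auto
  have le_r: "c \<le> r x" if "\<And>t. 0 \<le> t \<Longrightarrow> c \<le> q (x + t *\<^sub>R a) - t * q a" for c x
    unfolding r_def using that by (intro cINF_greatest) auto
  have "sublinear r"
  proof (rule sublinearI)
    fix x y
    have "r (x + y) - (q (y + t2 *\<^sub>R a) - t2 * q a) \<le> r x" if t2: "0 \<le> t2" for t2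
    proof (rule le_r)
      fix t1 :: real assume t1: "0 \<le> t1"
      have "r (x + y) \<le> q ((x + y) + (t1 + t2) *\<^sub>R a) - (t1 + t2) * q a"
        using r_le t1 t2 by simp
      also have "q ((x + y) + (t1 + t2) *\<^sub>R a) \<le> q (x + t1 *\<^sub>R a) + q (y + t2 *\<^sub>R a)"
        using sublinear_add_le[OF assms(1), of "x + t1 *\<^sub>R a" "y + t2 *\<^sub>R a"]
        by (simp add: algebra_simps)
      finally show "r (x + y) - (q (y + t2 *\<^sub>R a) - t2 * q a) \<le> q (x + t1 *\<^sub>R a) - t1 * q a"
        by (simp add: algebra_simps)
    qed
    then have "r (x + y) - r x \<le> r y" by (intro le_r) (auto simp: algebra_simps)
    then show "r (x + y) \<le> r x + r y" by simp
  next
    fix c :: real and x assume c: "0 < c"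
    have "r (c *\<^sub>R x) / c \<le> r x"
    proof (rule le_r)
      fix t :: real assume t: "0 \<le> t"
      have "r (c *\<^sub>R x) \<le> q (c *\<^sub>R (x + t *\<^sub>R a)) - (c * t) * q a"
        using r_le[of "c * t" "c *\<^sub>R x"] c t by (simp add: algebra_simps)
      also have "q (c *\<^sub>R (x + t *\<^sub>R a)) = c * q (x + t *\<^sub>R a)"
        using sublinear_scaleR[OF assms(1)] c by simp
      finally show "r (c *\<^sub>R x) / c \<le> q (x + t *\<^sub>R a) - t * q a"
        using c by (simp add: field_simps)
    qed
    then show "r (c *\<^sub>R x) \<le> c * r x" using c by (simp add: field_simps)
  qed
  moreover have "r \<le> q" using r_le[of 0] by (simp add: le_funI)
  moreover have "r (- a) \<le> - q a" using r_le[of 1 "- a"] sublinear_zero[OF assms(1)] by simp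
  ultimately show ?thesis using that by blast
qed

lemma minimal_sublinear_imp_linear:
  assumes sub: "sublinear q" and min: "\<And>r. sublinear r \<Longrightarrow> r \<le> q \<Longrightarrow> r = q"
  shows "linear q"
proof -
  have neg: "q (- a) = - q a" for a
  proof -
    obtain r where r: "sublinear r" "r \<le> q" and r_neg: "r (- a) \<le> - q a"
      using sublinear_INF_ray[OF sub] .
    from r have "r = q" by (rule min)
    with r_neg sublinear_neg_le[OF sub, of "- a"] show ?thesis by simp
  qed
  show ?thesis
  proof (rule linearI)
    fix x y
    have "- q (x + y) \<le> - q x - q y"
      using sublinear_add_le[OF sub, of "- x" "- y"] neg[of "x + y"] neg[of x] neg[of y] by simp
    then show "q (x + y) = q x + q y" using sublinear_add_le[OF sub, of x y] by simp
  next
    fix c :: real and x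
    show "q (c *\<^sub>R x) = c *\<^sub>R q x"
    proof (cases "0 \<le> c")
      case True
      then show ?thesis using sublinear_scaleR[OF sub] by simp
    next
      case False
      then have "q (- (c *\<^sub>R x)) = - c * q x" using sublinear_scaleR[OF sub, of "- c" x] by simp
      then show ?thesis using neg[of "c *\<^sub>R x"] by simp
    qed
  qed
qed

text \<open>Zorn's lemma yields a minimal sublinear functional below \<open>p\<close>, which is linear.\<close>
theorem Hahn_Banach_sublinear:
  assumes "sublinear p"
  obtains f where "linear f" and "\<And>x. f x \<le> p x"
proof -
  define A where "A = {q. sublinear q \<and> q \<le> p}"
  have po: "partial_order_on A (relation_of (\<lambda>q r. r \<le> q) A)"
    by (rule partial_order_on_relation_ofI) (simp, metis order.trans, metis order.antisym)
  have chain_bound: "\<exists>u\<in>A. \<forall>q\<in>C. u \<le> q"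
    if C: "C \<in> Chains (relation_of (\<lambda>q r. r \<le> q) A)" for C
  proof (cases "C = {}")
    case True
    show ?thesis using assms unfolding A_def by (intro bexI[of _ p]) (simp_all add: True)
  next
    case False
    have sub: "sublinear q \<and> q \<le> p" if "q \<in> C" for q
      using Chains_relation_of[OF C] that unfolding A_def by auto
    have chain: "q \<le> r \<or> r \<le> q" if "q \<in> C" "r \<in> C" for q r
      using C that unfolding Chains_def relation_of_def by auto
    obtain q0 where q0: "q0 \<in> C" using False by blast
    have INF_le: "(\<lambda>x. INF q\<in>C. q x) \<le> q" if "q \<in> C" for q
      using sublinear_INF_chain(2)[of C p] False sub chain that by blast
    have "sublinear (\<lambda>x. INF q\<in>C. q x)"
      using sublinear_INF_chain(1)[of C p] False sub chain by blast
    moreover have "(\<lambda>x. INF q\<in>C. q x) \<le> p"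
      using order_trans[OF INF_le[OF q0]] sub[OF q0] by blast
    ultimately have "(\<lambda>x. INF q\<in>C. q x) \<in> A" unfolding A_def by simp
    with INF_le show ?thesis by blast
  qed
  from predicate_Zorn[OF po chain_bound]
  obtain m where m: "m \<in> A" and min: "\<And>q. q \<in> A \<Longrightarrow> q \<le> m \<Longrightarrow> q = m"
    by auto
  have "linear m"
  proof (rule minimal_sublinear_imp_linear)
    show "sublinear m" using m unfolding A_def by blast
    fix r assume r: "sublinear r" "r \<le> m"
    moreover have "m \<le> p" using m unfolding A_def by blast
    ultimately have "r \<in> A" unfolding A_def using order_trans by blast
    then show "r = m" using r(2) by (rule min)
  qed
  moreover have "m x \<le> p x" for x using m unfolding A_def by (simp add: le_fun_def)
  ultimately show ?thesis by (rule that)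
qed

section \<open>Separating a convex set from a ball\<close>

definition cone_gauge :: "'v::real_normed_vector set \<Rightarrow> real \<Rightarrow> 'v \<Rightarrow> real" where
  "cone_gauge K \<rho> v = Inf ((\<lambda>(l, k). norm (v + l *\<^sub>R k) - l * \<rho>) ` ({0..} \<times> K))"

lemma cone_gauge_le:
  assumes K_far: "\<And>k. k \<in> K \<Longrightarrow> \<rho> \<le> norm k" and "0 \<le> l" and "k \<in> K"
  shows "cone_gauge K \<rho> v \<le> norm (v + l *\<^sub>R k) - l * \<rho>"
proof -
  have "bdd_below ((\<lambda>(l, k). norm (v + l *\<^sub>R k) - l * \<rho>) ` ({0..} \<times> K))"
  proof (rule bdd_belowI2[where m="- norm v"], clarify)
    fix l k assume "(0::real) \<le> l" "k \<in> K"
    then have "l * \<rho> \<le> norm (l *\<^sub>R k)" using K_far by (simp add: mult_left_mono)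
    also have "\<dots> \<le> norm (v + l *\<^sub>R k) + norm v" using norm_triangle_ineq4[of "v + l *\<^sub>R k" v] by simp
    finally show "- norm v \<le> norm (v + l *\<^sub>R k) - l * \<rho>" by simp
  qed
  then show ?thesis unfolding cone_gauge_def using assms(2,3) by (intro cINF_lower2[where x="(l, k)"]) auto
qed

lemma sublinear_cone_gauge:
  fixes K :: "'v::real_normed_vector set"
  assumes "convex K" and "K \<noteq> {}" and K_far: "\<And>k. k \<in> K \<Longrightarrow> \<rho> \<le> norm k"
  shows "sublinear (cone_gauge K \<rho>)"
proof -
  let ?p = "cone_gauge K \<rho>"
  have p_le: "?p v \<le> norm (v + l *\<^sub>R k) - l * \<rho>" if "0 \<le> l" "k \<in> K" for l k v
    by (rule cone_gauge_le[OF _ that]) (fact K_far)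
  have le_p: "c \<le> ?p v" if "\<And>l k. 0 \<le> l \<Longrightarrow> k \<in> K \<Longrightarrow> c \<le> norm (v + l *\<^sub>R k) - l * \<rho>" for c v
    unfolding cone_gauge_def using that \<open>K \<noteq> {}\<close> by (intro cINF_greatest) auto
  show ?thesis
  proof (rule sublinearI)
    fix x y
    have key: "?p (x + y) \<le> (norm (x + l1 *\<^sub>R k1) - l1 * \<rho>) + (norm (y + l2 *\<^sub>R k2) - l2 * \<rho>)"
      if "0 \<le> l1" "k1 \<in> K" "0 \<le> l2" "k2 \<in> K" for l1 k1 l2 k2
    proof (cases "l1 + l2 = 0")
      case True
      then have "l1 = 0" "l2 = 0" using that by auto
      then show ?thesis using p_le[of 0 k1 "x + y"] that norm_triangle_ineq[of x y] by simp
    next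
      case False
      define l where "l = l1 + l2"
      have l: "0 < l" using False that unfolding l_def by simp
      define k where "k = (l1 / l) *\<^sub>R k1 + (l2 / l) *\<^sub>R k2"
      have "k \<in> K"
        unfolding k_def using \<open>convex K\<close> that l
        by (intro convexD) (auto simp: l_def add_divide_distrib[symmetric])
      have "?p (x + y) \<le> norm (x + y + l *\<^sub>R k) - l * \<rho>"
        using p_le[OF less_imp_le[OF l] \<open>k \<in> K\<close>] .
      also have "x + y + l *\<^sub>R k = (x + l1 *\<^sub>R k1) + (y + l2 *\<^sub>R k2)"
        unfolding k_def using l by (simp add: scaleR_add_right algebra_simps)
      also have "norm \<dots> \<le> norm (x + l1 *\<^sub>R k1) + norm (y + l2 *\<^sub>R k2)"
        by (rule norm_triangle_ineq)
      finally show ?thesis unfolding l_def by (simp add: algebra_simps)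
    qed
    have "?p (x + y) - (norm (y + l2 *\<^sub>R k2) - l2 * \<rho>) \<le> ?p x" if "0 \<le> l2" "k2 \<in> K" for l2 k2
    proof (rule le_p)
      fix l k assume "(0::real) \<le> l" "k \<in> K"
      from key[OF this that] show "?p (x + y) - (norm (y + l2 *\<^sub>R k2) - l2 * \<rho>) \<le> norm (x + l *\<^sub>R k) - l * \<rho>"
        by simp
    qed
    then have "?p (x + y) - ?p x \<le> ?p y" by (intro le_p) (auto simp: algebra_simps)
    then show "?p (x + y) \<le> ?p x + ?p y" by simp
  next
    fix c :: real and x assume c: "0 < c"
    have "?p (c *\<^sub>R x) / c \<le> ?p x"
    proof (rule le_p)
      fix l k assume lk: "(0::real) \<le> l" "k \<in> K"
      have "?p (c *\<^sub>R x) \<le> norm (c *\<^sub>R x + (c * l) *\<^sub>R k) - (c * l) * \<rho>"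
        using p_le[of "c * l" k "c *\<^sub>R x"] lk c by simp
      also have "c *\<^sub>R x + (c * l) *\<^sub>R k = c *\<^sub>R (x + l *\<^sub>R k)" by (simp add: algebra_simps)
      also have "norm (c *\<^sub>R (x + l *\<^sub>R k)) = c * norm (x + l *\<^sub>R k)" using c by simp
      finally show "?p (c *\<^sub>R x) / c \<le> norm (x + l *\<^sub>R k) - l * \<rho>"
        using c by (simp add: field_simps)
    qed
    then show "?p (c *\<^sub>R x) \<le> c * ?p x" using c by (simp add: field_simps)
  qed
qed

text \<open>Dominating \<open>f\<close> by the gauge above gives \<open>f v \<le> norm v\<close> (take \<open>l = 0\<close>) and \<open>f (- k) \<le> - \<rho>\<close>
  (take \<open>v = - k\<close>, \<open>l = 1\<close>).\<close>
lemma convex_separation_norm_ge: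
  fixes K :: "'v::real_normed_vector set"
  assumes "convex K" and K_far: "\<And>k. k \<in> K \<Longrightarrow> \<rho> \<le> norm k"
  obtains f where "bounded_linear f" and "\<And>k. k \<in> K \<Longrightarrow> \<rho> \<le> f k"
proof (cases "K = {}")
  case True
  then show ?thesis using that[of "\<lambda>_. 0"] by simp
next
  case False
  then obtain k0 where k0: "k0 \<in> K" by blast
  have p_le: "cone_gauge K \<rho> v \<le> norm (v + l *\<^sub>R k) - l * \<rho>" if "0 \<le> l" "k \<in> K" for l k v
    by (rule cone_gauge_le[OF _ that]) (fact K_far)
  obtain f where f: "linear f" and f_le: "\<And>v. f v \<le> cone_gauge K \<rho> v"
    using Hahn_Banach_sublinear[OF sublinear_cone_gauge[OF \<open>convex K\<close> False K_far]] by blast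
  have f_norm: "f v \<le> norm v" for v using f_le[of v] p_le[OF order_refl k0, of v] by simp
  have "bounded_linear f"
  proof (rule bounded_linear_intro[where K=1])
    show "f (x + y) = f x + f y" "f (r *\<^sub>R x) = r *\<^sub>R f x" for x y r
      using f by (simp_all add: linear_add linear_scale)
    show "norm (f x) \<le> norm x * 1" for x
      using f_norm[of x] f_norm[of "- x"] f by (simp add: linear_neg abs_le_iff)
  qed
  moreover have "\<rho> \<le> f k" if "k \<in> K" for k
    using f_le[of "- k"] p_le[of 1 k "- k"] that f by (simp add: linear_neg)
  ultimately show ?thesis using that by blast
qed

section \<open>Affine minorants of convex functions\<close>

text \<open>Separate \<open>E\<close> from the point \<open>(w, m - \<rho>)\<close>, which lies at distance at least \<open>\<rho>\<close> from \<open>E\<close>;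
  the point of \<open>E\<close> above \<open>w\<close> forces the separating functional to increase in the vertical direction.\<close>
lemma convex_affine_minorant:
  fixes E :: "('z::real_normed_vector \<times> real) set"
  assumes "convex E" and w: "(w, t0) \<in> E" and "0 < \<rho>"
    and above: "\<And>z t. (z, t) \<in> E \<Longrightarrow> norm (z - w) < \<rho> \<Longrightarrow> m \<le> t"
  obtains \<psi> \<beta> where "bounded_linear \<psi>" and "\<And>z t. (z, t) \<in> E \<Longrightarrow> \<psi> z + \<beta> \<le> t"
proof -
  define P where "P = (w, m - \<rho>)"
  have conv: "convex ((\<lambda>e. e - P) ` E)"
    using convex_translation_subtract[OF \<open>convex E\<close>] by simp
  have far: "\<rho> \<le> norm k" if "k \<in> (\<lambda>e. e - P) ` E" for k
  proof -
    from that obtain z t where zt: "(z, t) \<in> E" and "k = (z, t) - P" by auto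
    then have k: "k = (z - w, t - (m - \<rho>))" unfolding P_def by simp
    show ?thesis
    proof (cases "norm (z - w) < \<rho>")
      case True
      then have "\<rho> \<le> \<bar>t - (m - \<rho>)\<bar>" using above[OF zt] by simp
      then show ?thesis using norm_snd_le[of "t - (m - \<rho>)" "z - w"] k by simp
    next
      case False
      then show ?thesis using norm_fst_le[of "z - w" "t - (m - \<rho>)"] k by simp
    qed
  qed
  obtain f where f: "bounded_linear f" and f_ge: "\<And>k. k \<in> (\<lambda>e. e - P) ` E \<Longrightarrow> \<rho> \<le> f k"
    using convex_separation_norm_ge[OF conv far] by blast
  interpret f: bounded_linear f by (fact f)
  define a where "a = f (0, 1)"
  have f_split: "f (z, t) = f (z, 0) + t * a" for z t
    using f.add[of "(z, 0)" "(0, t)"] f.scaleR[of t "(0, 1)"] unfolding a_def by simp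
  have sep: "\<rho> + f (w, 0) + (m - \<rho>) * a \<le> f (z, 0) + t * a" if "(z, t) \<in> E" for z t
  proof -
    have "\<rho> \<le> f ((z, t) - P)" using that by (intro f_ge imageI)
    also have "f ((z, t) - P) = f (z, t) - f (w, m - \<rho>)" unfolding P_def by (rule f.diff)
    finally show ?thesis using f_split[of z t] f_split[of w "m - \<rho>"] by simp
  qed
  have "m \<le> t0" using above[OF w] \<open>0 < \<rho>\<close> by simp
  then have "0 < t0 - (m - \<rho>)" using \<open>0 < \<rho>\<close> by simp
  moreover have "0 < (t0 - (m - \<rho>)) * a"
    using sep[OF w] \<open>0 < \<rho>\<close> by (simp add: algebra_simps)
  ultimately have "0 < a" by (simp add: zero_less_mult_iff)
  have "bounded_linear (\<lambda>z. - f (z, 0) / a)"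
    using bounded_linear_compose[OF bounded_linear_divide[of "- a"]
        bounded_linear_compose[OF f bounded_linear_Pair[OF bounded_linear_ident bounded_linear_zero]]]
    by simp
  moreover have "- f (z, 0) / a + (\<rho> + f (w, 0) + (m - \<rho>) * a) / a \<le> t" if "(z, t) \<in> E" for z t
  proof -
    have "\<rho> + f (w, 0) + (m - \<rho>) * a - f (z, 0) \<le> t * a" using sep[OF that] by simp
    then have "(\<rho> + f (w, 0) + (m - \<rho>) * a - f (z, 0)) / a \<le> t"
      using \<open>0 < a\<close> by (simp add: pos_divide_le_eq)
    then show ?thesis by (simp add: diff_divide_distrib)
  qed
  ultimately show ?thesis by (rule that)
qed

lemma convex_perturbed_epigraph:
  fixes g :: "'z::real_normed_vector \<Rightarrow> ereal" and L :: "'s::real_normed_vector \<Rightarrow> 'z"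
  assumes "convex_efun g" and "linear L" and "linear \<phi>" and "0 \<le> \<epsilon>"
  shows "convex {(z, t). \<exists>s. g (z - L s) \<le> ereal (t - \<phi> s - \<epsilon> * norm s)}" (is "convex ?E")
proof (rule convexI)
  fix e1 e2 and u v :: real
  assume "e1 \<in> ?E" "e2 \<in> ?E" and uv: "0 \<le> u" "0 \<le> v" "u + v = 1"
  then obtain z1 t1 s1 z2 t2 s2 where e: "e1 = (z1, t1)" "e2 = (z2, t2)"
    and s1: "g (z1 - L s1) \<le> ereal (t1 - \<phi> s1 - \<epsilon> * norm s1)"
    and s2: "g (z2 - L s2) \<le> ereal (t2 - \<phi> s2 - \<epsilon> * norm s2)"
    by auto
  define s where "s = u *\<^sub>R s1 + v *\<^sub>R s2"
  have "u *\<^sub>R (z1 - L s1, t1 - \<phi> s1 - \<epsilon> * norm s1) + v *\<^sub>R (z2 - L s2, t2 - \<phi> s2 - \<epsilon> * norm s2)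
        \<in> {(z, t). g z \<le> ereal t}"
    using assms(1) s1 s2 uv unfolding convex_efun_def by (intro convexD) auto
  moreover have "u *\<^sub>R (z1 - L s1) + v *\<^sub>R (z2 - L s2) = (u *\<^sub>R z1 + v *\<^sub>R z2) - L s"
    unfolding s_def using \<open>linear L\<close> by (simp add: linear_add linear_scale algebra_simps)
  moreover have "u * (t1 - \<phi> s1 - \<epsilon> * norm s1) + v * (t2 - \<phi> s2 - \<epsilon> * norm s2)
      \<le> (u * t1 + v * t2) - \<phi> s - \<epsilon> * norm s"
  proof -
    have "norm s \<le> u * norm s1 + v * norm s2"
      unfolding s_def using norm_triangle_ineq[of "u *\<^sub>R s1" "v *\<^sub>R s2"] uv by simp
    then have "\<epsilon> * norm s \<le> \<epsilon> * (u * norm s1 + v * norm s2)" using \<open>0 \<le> \<epsilon>\<close> by (rule mult_left_mono)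
    moreover have "\<phi> s = u * \<phi> s1 + v * \<phi> s2" unfolding s_def using \<open>linear \<phi>\<close> by (simp add: linear_add linear_scale)
    ultimately show ?thesis by (simp add: algebra_simps)
  qed
  ultimately have "g ((u *\<^sub>R z1 + v *\<^sub>R z2) - L s) \<le> ereal ((u * t1 + v * t2) - \<phi> s - \<epsilon> * norm s)"
    by (auto intro: order_trans)
  then show "u *\<^sub>R e1 + v *\<^sub>R e2 \<in> ?E" unfolding e by auto
qed

lemma le_of_forall_pos_mult_le_add:
  fixes a b M :: real
  assumes "\<And>t. 0 < t \<Longrightarrow> t * a \<le> t * b + M"
  shows "a \<le> b"
proof (rule ccontr)
  assume "\<not> a \<le> b"
  define t where "t = (\<bar>M\<bar> + 1) / (a - b)"
  have "0 < t" and "t * (a - b) = \<bar>M\<bar> + 1" using \<open>\<not> a \<le> b\<close> unfolding t_def by auto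
  then show False using assms[of t] by (simp add: right_diff_distrib)
qed

lemma perturbed_affine_minorant:
  fixes g :: "'z::real_normed_vector \<Rightarrow> ereal" and L :: "'s::real_normed_vector \<Rightarrow> 'z"
  assumes "convex_efun g" and "linear L" and "linear \<phi>" and "0 \<le> \<epsilon>" and gw: "g w = ereal c"
    and "0 < \<rho>" and bound: "\<And>z s t. norm (z - w) < \<rho> \<Longrightarrow>
      g (z - L s) \<le> ereal (t - \<phi> s - \<epsilon> * norm s) \<Longrightarrow> m \<le> t"
  obtains \<psi> \<beta> where "bounded_linear \<psi>" and "\<And>z. ereal (\<psi> z + \<beta>) \<le> g z"
    and "\<And>s. \<bar>\<psi> (L s) - \<phi> s\<bar> \<le> \<epsilon> * norm s"
proof -
  define E where "E = {(z, t). \<exists>s. g (z - L s) \<le> ereal (t - \<phi> s - \<epsilon> * norm s)}"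
  have L0: "L 0 = 0" and \<phi>0: "\<phi> 0 = 0" using \<open>linear L\<close> \<open>linear \<phi>\<close> by (simp_all add: linear_0)
  have E_shift: "(z + L s, t + \<phi> s + \<epsilon> * norm s) \<in> E" if "g z \<le> ereal t" for z s t
    unfolding E_def using that by (auto intro!: exI[of _ s])
  have "(w, c) \<in> E" using E_shift[of w c 0] gw L0 \<phi>0 by simp
  moreover have "convex E" unfolding E_def using assms(1-4) by (rule convex_perturbed_epigraph)
  moreover have above: "m \<le> t" if "(z, t) \<in> E" "norm (z - w) < \<rho>" for z t
  proof -
    from that(1) obtain s where "g (z - L s) \<le> ereal (t - \<phi> s - \<epsilon> * norm s)"
      unfolding E_def by blast
    with that(2) show ?thesis by (rule bound)
  qed
  ultimately obtain \<psi> \<beta> where \<psi>: "bounded_linear \<psi>" and below: "\<And>z t. (z, t) \<in> E \<Longrightarrow> \<psi> z + \<beta> \<le> t"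
    using convex_affine_minorant[of E w c \<rho> m] \<open>0 < \<rho>\<close> by blast
  interpret \<psi>: bounded_linear \<psi> by (fact \<psi>)
  have minorant: "ereal (\<psi> z + \<beta>) \<le> g z" for z
  proof (cases "g z")
    case (real v)
    then show ?thesis using below[OF E_shift[of z v 0]] L0 \<phi>0 by simp
  next
    case MInf
    then show ?thesis using below[OF E_shift[of z "\<psi> z + \<beta> - 1" 0]] L0 \<phi>0 by simp
  qed simp
  have slope_le: "\<psi> (L s) - \<phi> s \<le> \<epsilon> * norm s" for s
  proof (rule le_of_forall_pos_mult_le_add)
    fix r :: real assume "0 < r"
    have "\<psi> (w + L (r *\<^sub>R s)) + \<beta> \<le> c + \<phi> (r *\<^sub>R s) + \<epsilon> * norm (r *\<^sub>R s)"
      using below[OF E_shift[of w c "r *\<^sub>R s"]] gw by simp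
    moreover have "\<psi> (w + L (r *\<^sub>R s)) = \<psi> w + r * \<psi> (L s)"
      using linear_scale[OF \<open>linear L\<close>] by (simp add: \<psi>.add \<psi>.scaleR)
    moreover have "\<phi> (r *\<^sub>R s) = r * \<phi> s" using linear_scale[OF \<open>linear \<phi>\<close>] by simp
    ultimately show "r * (\<psi> (L s) - \<phi> s) \<le> r * (\<epsilon> * norm s) + (c - \<psi> w - \<beta>)"
      using \<open>0 < r\<close> by (simp add: algebra_simps)
  qed
  have "\<bar>\<psi> (L s) - \<phi> s\<bar> \<le> \<epsilon> * norm s" for s
  proof -
    have "\<psi> (L (- s)) - \<phi> (- s) = - (\<psi> (L s) - \<phi> s)"
      using linear_neg[OF \<open>linear L\<close>] linear_neg[OF \<open>linear \<phi>\<close>] by (simp add: \<psi>.neg)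
    then show ?thesis using slope_le[of s] slope_le[of "- s"] by simp
  qed
  with \<psi> minorant show ?thesis by (rule that)
qed

section \<open>Functions above the duality pairing\<close>

lemma closure_subset_weak_star_closure_of: "closure C \<subseteq> weak_star closure_of C"
proof -
  have "continuous_map euclidean weak_star id"
    unfolding weak_star_def
    by (rule continuous_map_pullback')
      (auto simp: continuous_map_componentwise_UNIV o_def intro!: continuous_intros)
  from continuous_map_image_closure_subset[OF this] show ?thesis
    by (simp add: euclidean_closure_of)
qed

lemma canon_apply: "blinfun_apply (canon x) f = blinfun_apply f x"
  unfolding canon_def by (simp add: bounded_linear_Blinfun_apply blinfun.bounded_linear_left)

lemma pairing_lower_bound_near:
  fixes w :: "'a::real_normed_vector \<times> ('a \<Rightarrow>\<^sub>L real)"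
  obtains \<delta> where "0 < \<delta>"
    and "\<And>z. norm (z - w) < \<delta> \<Longrightarrow> blinfun_apply (snd w) (fst w) - 1 < blinfun_apply (snd z) (fst z)"
proof -
  have "isCont (\<lambda>z. blinfun_apply (snd z) (fst z)) w" by (intro continuous_intros)
  then obtain \<delta> where "0 < \<delta>"
    and near: "\<And>z. dist z w < \<delta> \<Longrightarrow> dist (blinfun_apply (snd z) (fst z)) (blinfun_apply (snd w) (fst w)) < 1"
    unfolding continuous_at_eps_delta by (meson zero_less_one)
  have "blinfun_apply (snd w) (fst w) - 1 < blinfun_apply (snd z) (fst z)" if "norm (z - w) < \<delta>" for z
    using near[of z] that by (simp add: dist_norm dist_real_def abs_less_iff)
  with \<open>0 < \<delta>\<close> show ?thesis by (rule that)
qed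

lemma edom_conj_fitz_of_affine_minorant:
  fixes h :: "'a::real_normed_vector \<times> ('a \<Rightarrow>\<^sub>L real) \<Rightarrow> ereal"
  assumes "bounded_linear \<psi>" and minorant: "\<And>z. ereal (\<psi> z + \<beta>) \<le> h z"
  shows "(Blinfun (\<lambda>x. \<psi> (x, 0)), Blinfun (\<lambda>xs. \<psi> (0, xs))) \<in> edom (conj_fitz h)"
proof -
  interpret \<psi>: bounded_linear \<psi> by (fact assms(1))
  have "bounded_linear (\<lambda>x. \<psi> (x, 0))" "bounded_linear (\<lambda>xs. \<psi> (0, xs))"
    by (auto intro!: bounded_linear_compose[OF assms(1)] bounded_linear_Pair)
  then have eq: "blinfun_apply (Blinfun (\<lambda>x. \<psi> (x, 0))) x + blinfun_apply (Blinfun (\<lambda>xs. \<psi> (0, xs))) xs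
      = \<psi> (x, xs)" for x xs
    using \<psi>.add[of "(x, 0)" "(0, xs)"] by (simp add: bounded_linear_Blinfun_apply)
  have "conj_fitz h (Blinfun (\<lambda>x. \<psi> (x, 0)), Blinfun (\<lambda>xs. \<psi> (0, xs))) \<le> ereal (- \<beta>)"
    unfolding conj_fitz_def
  proof (simp only: prod.case, intro SUP_least)
    fix p :: "'a \<times> ('a \<Rightarrow>\<^sub>L real)"
    show "ereal (blinfun_apply (Blinfun (\<lambda>x. \<psi> (x, 0))) (fst p)
        + blinfun_apply (Blinfun (\<lambda>xs. \<psi> (0, xs))) (snd p)) - h p \<le> ereal (- \<beta>)"
      using minorant[of p] unfolding eq[of "fst p" "snd p"] by (cases "h p") auto
  qed
  then show ?thesis unfolding edom_def by (auto intro: le_less_trans)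
qed

lemma above_pairing_affine_minorant:
  fixes h :: "'a::real_normed_vector \<times> ('a \<Rightarrow>\<^sub>L real) \<Rightarrow> ereal"
    and L :: "'s::real_normed_vector \<Rightarrow> 'a \<times> ('a \<Rightarrow>\<^sub>L real)"
  assumes "convex_efun h" and coupling: "\<And>x xs. ereal (blinfun_apply xs x) \<le> h (x, xs)"
    and "w \<in> edom h" and "linear L" and "linear \<phi>" and "0 < \<epsilon>"
    and shift: "\<And>z s. norm (z - w) < \<epsilon> \<Longrightarrow> blinfun_apply (snd z) (fst z)
      \<le> blinfun_apply (snd (z - L s)) (fst (z - L s)) + \<phi> s + \<epsilon> * norm s"
  obtains \<psi> \<beta> where "bounded_linear \<psi>" and "\<And>z. ereal (\<psi> z + \<beta>) \<le> h z"
    and "\<And>s. \<bar>\<psi> (L s) - \<phi> s\<bar> \<le> \<epsilon> * norm s"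
proof -
  have pairing_le: "ereal (blinfun_apply (snd z) (fst z)) \<le> h z" for z
    using coupling[where x="fst z" and xs="snd z"] by simp
  obtain c where c: "h w = ereal c"
    using \<open>w \<in> edom h\<close> pairing_le[of w] unfolding edom_def by (cases "h w") auto
  obtain \<delta> where "0 < \<delta>" and near: "\<And>z. norm (z - w) < \<delta> \<Longrightarrow>
      blinfun_apply (snd w) (fst w) - 1 < blinfun_apply (snd z) (fst z)"
    using pairing_lower_bound_near[of w] by blast
  show ?thesis
  proof (rule perturbed_affine_minorant[OF \<open>convex_efun h\<close> \<open>linear L\<close> \<open>linear \<phi>\<close> _ c])
    show "0 \<le> \<epsilon>" "0 < min \<epsilon> \<delta>" using \<open>0 < \<epsilon>\<close> \<open>0 < \<delta>\<close> by simp_all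
    fix z s t
    assume z: "norm (z - w) < min \<epsilon> \<delta>" and t: "h (z - L s) \<le> ereal (t - \<phi> s - \<epsilon> * norm s)"
    have "blinfun_apply (snd (z - L s)) (fst (z - L s)) \<le> t - \<phi> s - \<epsilon> * norm s"
      using order_trans[OF pairing_le t] by simp
    then have "blinfun_apply (snd z) (fst z) \<le> t" using shift[of z s] z by simp
    then show "blinfun_apply (snd w) (fst w) - 1 \<le> t" using near[of z] z by simp
  qed (rule that)
qed

lemma dual_in_closure_conj_fitz:
  fixes h :: "'a::real_normed_vector \<times> ('a \<Rightarrow>\<^sub>L real) \<Rightarrow> ereal"
  assumes "convex_efun h" and coupling: "\<And>x xs. ereal (blinfun_apply xs x) \<le> h (x, xs)"
    and "(x, xs) \<in> edom h"
  shows "xs \<in> closure (fst ` edom (conj_fitz h))"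
  unfolding closure_approachable_le
proof (intro allI impI)
  fix \<epsilon> :: real assume "0 < \<epsilon>"
  have shift: "blinfun_apply (snd z) (fst z)
      \<le> blinfun_apply (snd (z - (s, 0))) (fst (z - (s, 0))) + blinfun_apply xs s + \<epsilon> * norm s"
    if "norm (z - (x, xs)) < \<epsilon>" for z s
  proof -
    have "norm (snd z - xs) < \<epsilon>" using norm_snd_le[of "snd z - xs" "fst z - x"] that by (cases z) simp
    have "blinfun_apply (snd z - xs) s \<le> norm (snd z - xs) * norm s"
      using abs_le_D1[OF norm_blinfun[of "snd z - xs" s, unfolded real_norm_def]] .
    also have "\<dots> \<le> \<epsilon> * norm s"
      using \<open>norm (snd z - xs) < \<epsilon>\<close> by (simp add: mult_right_mono)
    finally show ?thesis by (simp add: blinfun.diff_left blinfun.diff_right)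
  qed
  have lin_L: "linear (\<lambda>s::'a. (s, 0::'a \<Rightarrow>\<^sub>L real))"
    by (intro bounded_linear.linear bounded_linear_Pair bounded_linear_ident bounded_linear_zero)
  have lin_\<phi>: "linear (blinfun_apply xs)"
    by (intro bounded_linear.linear blinfun.bounded_linear_right)
  obtain \<psi> \<beta> where \<psi>: "bounded_linear \<psi>" and minorant: "\<And>z. ereal (\<psi> z + \<beta>) \<le> h z"
    and slope: "\<And>s. \<bar>\<psi> (s, 0) - blinfun_apply xs s\<bar> \<le> \<epsilon> * norm s"
    using above_pairing_affine_minorant[OF assms(1) coupling assms(3) lin_L lin_\<phi> \<open>0 < \<epsilon>\<close> shift]
    by blast
  let ?u = "Blinfun (\<lambda>x. \<psi> (x, 0))"
  have app: "blinfun_apply ?u s = \<psi> (s, 0)" for s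
    using bounded_linear_compose[OF \<psi> bounded_linear_Pair[OF bounded_linear_ident bounded_linear_zero]]
    by (simp add: bounded_linear_Blinfun_apply)
  have "?u \<in> fst ` edom (conj_fitz h)"
    using edom_conj_fitz_of_affine_minorant[OF \<psi> minorant] by (rule rev_image_eqI) simp
  moreover have "dist ?u xs \<le> \<epsilon>"
    unfolding dist_norm using app slope \<open>0 < \<epsilon>\<close> by (intro norm_blinfun_bound) (auto simp: blinfun.diff_left)
  ultimately show "\<exists>u\<in>fst ` edom (conj_fitz h). dist u xs \<le> \<epsilon>" by blast
qed

lemma canon_in_closure_conj_fitz:
  fixes h :: "'a::real_normed_vector \<times> ('a \<Rightarrow>\<^sub>L real) \<Rightarrow> ereal"
  assumes "convex_efun h" and coupling: "\<And>x xs. ereal (blinfun_apply xs x) \<le> h (x, xs)"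
    and "(x, xs) \<in> edom h"
  shows "canon x \<in> closure (snd ` edom (conj_fitz h))"
  unfolding closure_approachable_le
proof (intro allI impI)
  fix \<epsilon> :: real assume "0 < \<epsilon>"
  have shift: "blinfun_apply (snd z) (fst z)
      \<le> blinfun_apply (snd (z - (0, s))) (fst (z - (0, s))) + blinfun_apply s x + \<epsilon> * norm s"
    if "norm (z - (x, xs)) < \<epsilon>" for z s
  proof -
    have "norm (fst z - x) < \<epsilon>" using norm_fst_le[of "fst z - x" "snd z - xs"] that by (cases z) simp
    have "blinfun_apply s (fst z - x) \<le> norm s * norm (fst z - x)"
      using abs_le_D1[OF norm_blinfun[of s "fst z - x", unfolded real_norm_def]] .
    also have "\<dots> = norm (fst z - x) * norm s" by (rule mult.commute)
    also have "\<dots> \<le> \<epsilon> * norm s"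
      using \<open>norm (fst z - x) < \<epsilon>\<close> by (simp add: mult_right_mono)
    finally show ?thesis by (simp add: blinfun.diff_left blinfun.diff_right)
  qed
  have lin_L: "linear (\<lambda>s::'a \<Rightarrow>\<^sub>L real. (0::'a, s))"
    by (intro bounded_linear.linear bounded_linear_Pair bounded_linear_ident bounded_linear_zero)
  have lin_\<phi>: "linear (\<lambda>s. blinfun_apply s x)"
    by (intro bounded_linear.linear blinfun.bounded_linear_left)
  obtain \<psi> \<beta> where \<psi>: "bounded_linear \<psi>" and minorant: "\<And>z. ereal (\<psi> z + \<beta>) \<le> h z"
    and slope: "\<And>s. \<bar>\<psi> (0, s) - blinfun_apply s x\<bar> \<le> \<epsilon> * norm s"
    using above_pairing_affine_minorant[OF assms(1) coupling assms(3) lin_L lin_\<phi> \<open>0 < \<epsilon>\<close> shift]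
    by blast
  let ?v = "Blinfun (\<lambda>xs. \<psi> (0, xs))"
  have app: "blinfun_apply ?v s = \<psi> (0, s)" for s
    using bounded_linear_compose[OF \<psi> bounded_linear_Pair[OF bounded_linear_zero bounded_linear_ident]]
    by (simp add: bounded_linear_Blinfun_apply)
  have "?v \<in> snd ` edom (conj_fitz h)"
    using edom_conj_fitz_of_affine_minorant[OF \<psi> minorant] by (rule rev_image_eqI) simp
  moreover have "dist ?v (canon x) \<le> \<epsilon>"
    unfolding dist_norm using app slope \<open>0 < \<epsilon>\<close>
    by (intro norm_blinfun_bound) (auto simp: blinfun.diff_left canon_apply)
  ultimately show "\<exists>v\<in>snd ` edom (conj_fitz h). dist v (canon x) \<le> \<epsilon>" by blast
qed

theorem lemma3p3:
  fixes h :: "'a::banach \<times> ('a \<Rightarrow>\<^sub>L real) \<Rightarrow> ereal"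
  assumes "convex_efun h"
    and "\<And>x xs. h (x, xs) \<ge> ereal (blinfun_apply xs x)"
  shows "snd ` edom h \<subseteq> weak_star closure_of (fst ` edom (conj_fitz h)) \<and>
         canon ` fst ` edom h \<subseteq> weak_star closure_of (snd ` edom (conj_fitz h))"
proof (intro conjI subsetI)
  fix xs assume "xs \<in> snd ` edom h"
  then obtain x where "(x, xs) \<in> edom h" by force
  then have "xs \<in> closure (fst ` edom (conj_fitz h))"
    by (rule dual_in_closure_conj_fitz[OF assms])
  then show "xs \<in> weak_star closure_of (fst ` edom (conj_fitz h))"
    using closure_subset_weak_star_closure_of by blast
next
  fix y assume "y \<in> canon ` fst ` edom h"
  then obtain x xs where y: "y = canon x" and "(x, xs) \<in> edom h" by force
  from this(2) have "y \<in> closure (snd ` edom (conj_fitz h))"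
    unfolding y by (rule canon_in_closure_conj_fitz[OF assms])
  then show "y \<in> weak_star closure_of (snd ` edom (conj_fitz h))"
    using closure_subset_weak_star_closure_of by blast
qed

end
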